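(* Let $S$ be the set of $\mathcal{G}$-invariant elements of $L_2(\mathcal{X},\mathcal{Y},\mu)$. For every $f\in L_2(\mathcal{X},\mathcal{Y},\mu)$, the function $\bar f=\mathcal{O}f$ is the unique solution of the least squares problem $\bar f=\operatorname{argmin}_{s\in S}\|f-s\|_\mu^2$.
   Context: $\mathcal{G}$ is a compact, second countable, Hausdorff topological group with Haar probability measure $\lambda$. $\mathcal{X}$ is a nonempty Polish space on which $\mathcal{G}$ acts measurably, $(g,x)\mapsto gx$. $\mathcal{Y}=\mathbb{R}^k$ with an inner product $\langle\cdot,\cdot\rangle$ and norm $\|\cdot\|$. $\mu$ is a $\mathcal{G}$-invariant Borel probability measure on $\mathcal{X}$. $L_2(\mathcal{X},\mathcal{Y},\mu)$ is the Hilbert space of $\mu$-a.e. classes of measurable $f:\mathcal{X}\to\mathcal{Y}$ with $\|f\|_\mu^2=\int\|f(x)\|^2d\mu(x)<\infty$, inner product $\langle f,h\rangle_\mu=\int\langle f(x),h(x)\rangle d\mu(x)$. A function $f$ is $\mathcal{G}$-invariant if $f(gx)=f(x)$ for all $g,x$. The orbit averaging operator is $\mathcal{O}f(x)=\int_\mathcal{G}f(gx)\,d\lambda(g)$. Uniqueness is as elements of $L_2(\mathcal{X},\mathcal{Y},\mu)$. *)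

theory Defs
  imports "HOL-Probability.Probability"
begin

definition top_group :: "('g::topological_space \<Rightarrow> 'g \<Rightarrow> 'g) \<Rightarrow> ('g \<Rightarrow> 'g) \<Rightarrow> 'g \<Rightarrow> bool" where
  "top_group m i e \<longleftrightarrow>
     (\<forall>a b c. m (m a b) c = m a (m b c)) \<and>
     (\<forall>a. m e a = a \<and> m a e = a) \<and>
     (\<forall>a. m (i a) a = e \<and> m a (i a) = e) \<and>
     continuous_on UNIV (\<lambda>p. m (fst p) (snd p)) \<and>
     continuous_on UNIV i"

definition haar_prob :: "('g::topological_space \<Rightarrow> 'g \<Rightarrow> 'g) \<Rightarrow> 'g measure \<Rightarrow> bool" where
  "haar_prob m lam \<longleftrightarrow> sets lam = sets borel \<and> prob_space lam \<and>
     (\<forall>g. \<forall>A\<in>sets borel. emeasure lam ((m g) ` A) = emeasure lam A)"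

definition meas_action :: "('g::topological_space \<Rightarrow> 'g \<Rightarrow> 'g) \<Rightarrow> 'g \<Rightarrow> ('g \<Rightarrow> 'x::topological_space \<Rightarrow> 'x) \<Rightarrow> bool" where
  "meas_action m e act \<longleftrightarrow>
     (\<lambda>p. act (fst p) (snd p)) \<in> measurable (borel \<Otimes>\<^sub>M borel) borel \<and>
     (\<forall>x. act e x = x) \<and> (\<forall>g h x. act (m g h) x = act g (act h x))"

definition invariant_prob :: "('g \<Rightarrow> 'x::topological_space \<Rightarrow> 'x) \<Rightarrow> 'x measure \<Rightarrow> bool" where
  "invariant_prob act mu \<longleftrightarrow> sets mu = sets borel \<and> prob_space mu \<and>
     (\<forall>g. \<forall>A\<in>sets borel. emeasure mu (act g -` A) = emeasure mu A)"

text \<open>Representatives of elements of L2(X,Y,mu).\<close>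
definition L2 :: "'x measure \<Rightarrow> ('x \<Rightarrow> 'y::euclidean_space) set" where
  "L2 mu = {f. f \<in> borel_measurable mu \<and> integrable mu (\<lambda>x. (norm (f x))\<^sup>2)}"

definition L2_norm_sq :: "'x measure \<Rightarrow> ('x \<Rightarrow> 'y::euclidean_space) \<Rightarrow> real" where
  "L2_norm_sq mu f = (\<integral>x. (norm (f x))\<^sup>2 \<partial>mu)"

definition G_invariant :: "('g \<Rightarrow> 'x \<Rightarrow> 'x) \<Rightarrow> ('x \<Rightarrow> 'y) \<Rightarrow> bool" where
  "G_invariant act f \<longleftrightarrow> (\<forall>g x. f (act g x) = f x)"

definition inv_L2 :: "('g \<Rightarrow> 'x \<Rightarrow> 'x) \<Rightarrow> 'x measure \<Rightarrow> ('x \<Rightarrow> 'y::euclidean_space) set" where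
  "inv_L2 act mu = {s \<in> L2 mu. G_invariant act s}"

definition orbit_avg :: "'g measure \<Rightarrow> ('g \<Rightarrow> 'x \<Rightarrow> 'x) \<Rightarrow> ('x \<Rightarrow> 'y::euclidean_space) \<Rightarrow> 'x \<Rightarrow> 'y" where
  "orbit_avg lam act f x = (\<integral>g. f (act g x) \<partial>lam)"

end

theory Submission
  imports Defs
begin

text \<open>A Haar probability measure is also right invariant, so the orbit average \<open>\<O>f\<close> is
  \<open>G\<close>-invariant, and Jensen's inequality together with Tonelli and the invariance of \<open>mu\<close> puts it
  in \<open>L\<^sub>2\<close>. For invariant \<open>t\<close>, averaging \<open>f \<bullet> t\<close> along orbits and applying Fubini gives
  \<open>\<langle>\<O>f, t\<rangle> = \<langle>f, t\<rangle>\<close>, so \<open>f - \<O>f\<close> is orthogonal to the invariant subspace \<open>S\<close>.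
  Pythagoras then shows that \<open>\<O>f\<close> is the unique best approximation of \<open>f\<close> in \<open>S\<close>.\<close>

lemma top_group_laws:
  assumes "top_group m i e"
  shows "m (m a b) c = m a (m b c)" "m e a = a" "m a e = a" "m (i a) a = e" "m a (i a) = e"
    and "i (i a) = a" "i (m a b) = m (i b) (i a)" "m a (m (i a) b) = b" "m (i a) (m a b) = b"
proof -
  have assoc: "\<And>a b c. m (m a b) c = m a (m b c)" and unit: "\<And>a. m e a = a" "\<And>a. m a e = a"
    and inv: "\<And>a. m (i a) a = e" "\<And>a. m a (i a) = e"
    using assms unfolding top_group_def by auto
  then show "m (m a b) c = m a (m b c)" "m e a = a" "m a e = a" "m (i a) a = e" "m a (i a) = e"
    by auto
  show cancel: "m a (m (i a) b) = b" "m (i a) (m a b) = b" for a b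
    by (simp_all add: unit inv flip: assoc)
  have inverse_unique: "b = i a" if "m a b = e" for a b
    using cancel(2)[of a b] that unit(2) by simp
  show "i (i a) = a"
    using inverse_unique[OF inv(1)] by simp
  have "m (m a b) (m (i b) (i a)) = e"
    by (simp add: assoc cancel inv)
  then show "i (m a b) = m (i b) (i a)"
    by (rule inverse_unique[symmetric])
qed

lemma top_group_borel_measurable:
  fixes m :: "'g::second_countable_topology \<Rightarrow> 'g \<Rightarrow> 'g"
  assumes "top_group m i e"
  shows "(\<lambda>p. m (fst p) (snd p)) \<in> borel_measurable (borel \<Otimes>\<^sub>M borel)"
    and "i \<in> borel_measurable borel"
    and "m g \<in> borel_measurable borel"
    and "(\<lambda>g. m g h) \<in> borel_measurable borel"
proof -
  have mult: "continuous_on UNIV (\<lambda>p. m (fst p) (snd p))" and inv: "continuous_on UNIV i"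
    using assms unfolding top_group_def by auto
  show "(\<lambda>p. m (fst p) (snd p)) \<in> borel_measurable (borel \<Otimes>\<^sub>M borel)"
    unfolding borel_prod by (rule borel_measurable_continuous_onI[OF mult])
  show "i \<in> borel_measurable borel"
    by (rule borel_measurable_continuous_onI[OF inv])
  have "continuous_on UNIV (\<lambda>x. m (fst (g, x)) (snd (g, x)))"
    by (rule continuous_on_compose2[OF mult]) (auto intro: continuous_intros)
  then show "m g \<in> borel_measurable borel"
    by (intro borel_measurable_continuous_onI) simp
  have "continuous_on UNIV (\<lambda>x. m (fst (x, h)) (snd (x, h)))"
    by (rule continuous_on_compose2[OF mult]) (auto intro: continuous_intros)
  then show "(\<lambda>g. m g h) \<in> borel_measurable borel"
    by (intro borel_measurable_continuous_onI) simp
qed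

lemma haar_prob_emeasure_vimage_mult_left:
  assumes "top_group m i e" "haar_prob m lam" "A \<in> sets borel"
  shows "emeasure lam (m g -` A) = emeasure lam A"
proof -
  have "m g -` A = m (i g) ` A"
    using top_group_laws[OF assms(1)] by (auto intro: image_eqI[where x = "m g x" for x])
  then show ?thesis
    using assms(2,3) unfolding haar_prob_def by simp
qed

text \<open>Integrating the indicator of \<open>{(y, x). y\<inverse> x \<in> A}\<close> over \<open>lam \<Otimes> lam\<close> in both orders
  gives \<open>lam A\<close> and \<open>lam (A\<inverse>)\<close>; Fubini needs the Haar measure to be finite.\<close>

lemma haar_prob_emeasure_vimage_inverse:
  fixes m :: "'g::second_countable_topology \<Rightarrow> 'g \<Rightarrow> 'g"
  assumes G: "top_group m i e" and H: "haar_prob m lam" and A: "A \<in> sets borel"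
  shows "emeasure lam (i -` A) = emeasure lam A"
proof -
  note group = top_group_laws[OF G] and meas = top_group_borel_measurable[OF G]
  have sets_lam: "sets lam = sets borel" and "prob_space lam"
    using H unfolding haar_prob_def by auto
  interpret prob_space lam by fact
  interpret pair_sigma_finite lam lam ..
  have left: "emeasure lam (m g -` B) = emeasure lam B" if "B \<in> sets borel" for g B
    by (rule haar_prob_emeasure_vimage_mult_left[OF G H that])
  define \<phi> where "\<phi> p = (indicator A (m (i (fst p)) (snd p)) :: ennreal)" for p
  have "(\<lambda>p. m (i (fst p)) (snd p)) \<in> borel_measurable (borel \<Otimes>\<^sub>M borel)"
    using measurable_comp[OF _ meas(1), of "\<lambda>p. (i (fst p), snd p)"] meas(2)
    by (simp add: comp_def)
  then have "\<phi> \<in> borel_measurable (lam \<Otimes>\<^sub>M lam)"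
    unfolding \<phi>_def using A
    by (simp add: measurable_cong_sets[OF sets_pair_measure_cong[OF sets_lam sets_lam] refl])
  then have "(\<integral>\<^sup>+ x. (\<integral>\<^sup>+ y. \<phi> (y, x) \<partial>lam) \<partial>lam) = (\<integral>\<^sup>+ y. (\<integral>\<^sup>+ x. \<phi> (y, x) \<partial>lam) \<partial>lam)"
    by (rule Fubini)
  moreover have "(\<integral>\<^sup>+ x. \<phi> (y, x) \<partial>lam) = emeasure lam A" for y
  proof -
    have "(\<integral>\<^sup>+ x. \<phi> (y, x) \<partial>lam) = emeasure lam (m (i y) -` A)"
      using measurable_sets_borel[OF meas(3) A] sets_lam unfolding \<phi>_def
      by (simp add: indicator_def nn_integral_indicator[symmetric] del: nn_integral_indicator)
    then show ?thesis using left[OF A] by simp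
  qed
  moreover have "(\<integral>\<^sup>+ y. \<phi> (y, x) \<partial>lam) = emeasure lam (i -` A)" for x
  proof -
    have "m (i y) x = i (m (i x) y)" for y
      using group by simp
    then have "(\<integral>\<^sup>+ y. \<phi> (y, x) \<partial>lam) = emeasure lam (m (i x) -` (i -` A))"
      using measurable_sets_borel[OF meas(3) measurable_sets_borel[OF meas(2) A]] sets_lam
      unfolding \<phi>_def
      by (simp add: indicator_def nn_integral_indicator[symmetric] del: nn_integral_indicator)
    then show ?thesis using left[OF measurable_sets_borel[OF meas(2) A]] by simp
  qed
  ultimately show ?thesis
    by (simp add: emeasure_space_1)
qed

lemma haar_prob_distr_mult_right:
  fixes m :: "'g::second_countable_topology \<Rightarrow> 'g \<Rightarrow> 'g"
  assumes G: "top_group m i e" and H: "haar_prob m lam"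
  shows "distr lam lam (\<lambda>g. m g h) = lam"
proof (rule measure_eqI)
  note group = top_group_laws[OF G] and meas = top_group_borel_measurable[OF G]
  have sets_lam: "sets lam = sets borel"
    using H unfolding haar_prob_def by auto
  then have space_lam: "space lam = UNIV"
    using sets_eq_imp_space_eq by fastforce
  fix A assume "A \<in> sets (distr lam lam (\<lambda>g. m g h))"
  then have A: "A \<in> sets borel"
    using sets_lam by simp
  have "(\<lambda>g. m g h) \<in> measurable lam lam"
    using meas(4) measurable_cong_sets[OF sets_lam sets_lam] by simp
  then have "emeasure (distr lam lam (\<lambda>g. m g h)) A = emeasure lam ((\<lambda>g. m g h) -` A)"
    using A sets_lam by (simp add: emeasure_distr space_lam)
  also have "\<dots> = emeasure lam (i -` ((\<lambda>g. m g h) -` A))"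
    using haar_prob_emeasure_vimage_inverse[OF G H measurable_sets_borel[OF meas(4) A]] by simp
  also have "i -` ((\<lambda>g. m g h) -` A) = m (i h) -` (i -` A)"
    using group by auto
  also have "emeasure lam \<dots> = emeasure lam (i -` A)"
    by (rule haar_prob_emeasure_vimage_mult_left[OF G H measurable_sets_borel[OF meas(2) A]])
  also have "\<dots> = emeasure lam A"
    by (rule haar_prob_emeasure_vimage_inverse[OF G H A])
  finally show "emeasure (distr lam lam (\<lambda>g. m g h)) A = emeasure lam A" .
qed simp

lemma L2_diff:
  fixes f g :: "'x \<Rightarrow> 'y::euclidean_space"
  assumes "f \<in> L2 mu" "g \<in> L2 mu"
  shows "(\<lambda>x. f x - g x) \<in> L2 mu"
proof -
  have meas: "f \<in> borel_measurable mu" "g \<in> borel_measurable mu"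
    and int: "integrable mu (\<lambda>x. (norm (f x))\<^sup>2)" "integrable mu (\<lambda>x. (norm (g x))\<^sup>2)"
    using assms unfolding L2_def by auto
  have bound: "(norm (a - b))\<^sup>2 \<le> 2 * (norm a)\<^sup>2 + 2 * (norm b)\<^sup>2" for a b :: 'y
  proof -
    have "(norm (a - b))\<^sup>2 \<le> (norm a + norm b)\<^sup>2"
      by (simp add: power_mono norm_triangle_ineq4)
    also have "\<dots> \<le> 2 * (norm a)\<^sup>2 + 2 * (norm b)\<^sup>2"
      using zero_le_power2[of "norm a - norm b"] by (simp add: power2_diff power2_sum)
    finally show ?thesis .
  qed
  have "integrable mu (\<lambda>x. (norm (f x - g x))\<^sup>2)"
    by (rule Bochner_Integration.integrable_bound[where f = "\<lambda>x. 2 * (norm (f x))\<^sup>2 + 2 * (norm (g x))\<^sup>2"])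
      (use int meas bound in auto)
  then show ?thesis
    using meas unfolding L2_def by auto
qed

lemma L2_integrable_inner:
  fixes f g :: "'x \<Rightarrow> 'y::euclidean_space"
  assumes "f \<in> L2 mu" "g \<in> L2 mu"
  shows "integrable mu (\<lambda>x. f x \<bullet> g x)"
proof (rule Bochner_Integration.integrable_bound)
  show "integrable mu (\<lambda>x. (norm (f x))\<^sup>2 + (norm (g x))\<^sup>2)"
    using assms unfolding L2_def by auto
  show "(\<lambda>x. f x \<bullet> g x) \<in> borel_measurable mu"
    using assms unfolding L2_def by auto
  have "\<bar>a \<bullet> b\<bar> \<le> (norm a)\<^sup>2 + (norm b)\<^sup>2" for a b :: 'y
    using Cauchy_Schwarz_ineq2[of a b] zero_le_power2[of "norm a - norm b"]
      mult_nonneg_nonneg[OF norm_ge_zero norm_ge_zero, of a b]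
    by (simp add: power2_diff)
  then show "AE x in mu. norm (f x \<bullet> g x) \<le> norm ((norm (f x))\<^sup>2 + (norm (g x))\<^sup>2)"
    by auto
qed

lemma L2_norm_sq_nonneg: "0 \<le> L2_norm_sq mu f"
  unfolding L2_norm_sq_def by simp

lemma L2_norm_sq_eq_0_imp_AE:
  assumes "f \<in> L2 mu" "L2_norm_sq mu f = 0"
  shows "AE x in mu. f x = 0"
proof -
  have "AE x in mu. (norm (f x))\<^sup>2 = 0"
    using assms integral_nonneg_eq_0_iff_AE[of mu "\<lambda>x. (norm (f x))\<^sup>2"]
    unfolding L2_def L2_norm_sq_def by simp
  then show ?thesis
    by eventually_elim simp
qed

lemma L2_norm_sq_diff_pythagoras:
  assumes "f \<in> L2 mu" "a \<in> L2 mu" "s \<in> L2 mu"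
    and orthogonal: "(\<integral>x. (f x - a x) \<bullet> (a x - s x) \<partial>mu) = 0"
  shows "L2_norm_sq mu (\<lambda>x. f x - s x) = L2_norm_sq mu (\<lambda>x. f x - a x) + L2_norm_sq mu (\<lambda>x. a x - s x)"
proof -
  have fa: "(\<lambda>x. f x - a x) \<in> L2 mu" and as: "(\<lambda>x. a x - s x) \<in> L2 mu"
    using L2_diff assms by blast+
  have "(norm (f x - s x))\<^sup>2 = (norm (f x - a x))\<^sup>2 + 2 * ((f x - a x) \<bullet> (a x - s x)) + (norm (a x - s x))\<^sup>2"
    for x
    using dot_norm[of "f x - a x" "a x - s x"] by simp
  then have "L2_norm_sq mu (\<lambda>x. f x - s x)
      = (\<integral>x. (norm (f x - a x))\<^sup>2 + 2 * ((f x - a x) \<bullet> (a x - s x)) + (norm (a x - s x))\<^sup>2 \<partial>mu)"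
    unfolding L2_norm_sq_def by simp
  also have "\<dots> = L2_norm_sq mu (\<lambda>x. f x - a x) + L2_norm_sq mu (\<lambda>x. a x - s x)"
    using fa as L2_integrable_inner[OF fa as] orthogonal unfolding L2_def L2_norm_sq_def by simp
  finally show ?thesis .
qed

lemma L2_best_approximation:
  assumes "f \<in> L2 mu" "a \<in> S" "S \<subseteq> L2 mu"
    and diff_closed: "\<And>s. s \<in> S \<Longrightarrow> (\<lambda>x. a x - s x) \<in> S"
    and orthogonal: "\<And>t. t \<in> S \<Longrightarrow> (\<integral>x. (f x - a x) \<bullet> t x \<partial>mu) = 0"
  shows "\<forall>s \<in> S. L2_norm_sq mu (\<lambda>x. f x - a x) \<le> L2_norm_sq mu (\<lambda>x. f x - s x)"
    and "\<And>s. s \<in> S \<Longrightarrow> L2_norm_sq mu (\<lambda>x. f x - s x) \<le> L2_norm_sq mu (\<lambda>x. f x - a x) \<Longrightarrow>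
           AE x in mu. s x = a x"
proof -
  have pythagoras: "L2_norm_sq mu (\<lambda>x. f x - s x)
      = L2_norm_sq mu (\<lambda>x. f x - a x) + L2_norm_sq mu (\<lambda>x. a x - s x)" if "s \<in> S" for s
    using assms that by (intro L2_norm_sq_diff_pythagoras) auto
  then show "\<forall>s \<in> S. L2_norm_sq mu (\<lambda>x. f x - a x) \<le> L2_norm_sq mu (\<lambda>x. f x - s x)"
    by (simp add: L2_norm_sq_nonneg)
  fix s assume "s \<in> S" and "L2_norm_sq mu (\<lambda>x. f x - s x) \<le> L2_norm_sq mu (\<lambda>x. f x - a x)"
  then have "L2_norm_sq mu (\<lambda>x. a x - s x) = 0"
    using pythagoras L2_norm_sq_nonneg[of mu "\<lambda>x. a x - s x"] by fastforce
  then have "AE x in mu. a x - s x = 0"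
    using \<open>s \<in> S\<close> assms(3) diff_closed by (intro L2_norm_sq_eq_0_imp_AE) auto
  then show "AE x in mu. s x = a x"
    by eventually_elim simp
qed

lemma (in prob_space) norm_integral_power2_le_nn_integral:
  fixes F :: "'a \<Rightarrow> 'y::euclidean_space"
  assumes "F \<in> borel_measurable M"
  shows "ennreal ((norm (integral\<^sup>L M F))\<^sup>2) \<le> (\<integral>\<^sup>+ x. ennreal ((norm (F x))\<^sup>2) \<partial>M)"
proof (cases "integrable M F")
  case False
  then show ?thesis
    by (simp add: not_integrable_integral_eq)
next
  case True
  have "(ennreal (norm (integral\<^sup>L M F)))\<^sup>2 \<le> (\<integral>\<^sup>+ x. ennreal (norm (F x)) * 1 \<partial>M)\<^sup>2"
    using integral_norm_bound_ennreal[OF True] by (simp add: power_mono)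
  also have "\<dots> \<le> (\<integral>\<^sup>+ x. (ennreal (norm (F x)))\<^sup>2 \<partial>M) * (\<integral>\<^sup>+ x. 1\<^sup>2 \<partial>M)"
    by (rule Cauchy_Schwarz_nn_integral) (use assms in measurable)
  finally show ?thesis
    by (simp add: ennreal_power emeasure_space_1)
qed

lemma (in prob_space) integrable_if_nn_integral_norm_power2_finite:
  fixes F :: "'a \<Rightarrow> 'y::euclidean_space"
  assumes "F \<in> borel_measurable M" "(\<integral>\<^sup>+ x. ennreal ((norm (F x))\<^sup>2) \<partial>M) < \<infinity>"
  shows "integrable M F"
proof (rule integrableI_bounded)
  have "ennreal (norm (F x)) \<le> 1 + ennreal ((norm (F x))\<^sup>2)" for x
  proof -
    have "norm (F x) \<le> 1 + (norm (F x))\<^sup>2"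
      using zero_le_power2[of "norm (F x) - 1"]
      by (simp add: power2_diff) (use zero_le_power2[of "norm (F x)"] in linarith)
    then have "ennreal (norm (F x)) \<le> ennreal (1 + (norm (F x))\<^sup>2)"
      by (rule ennreal_leI)
    then show ?thesis
      by (simp add: ennreal_plus)
  qed
  then have "(\<integral>\<^sup>+ x. norm (F x) \<partial>M) \<le> (\<integral>\<^sup>+ x. 1 + ennreal ((norm (F x))\<^sup>2) \<partial>M)"
    by (intro nn_integral_mono)
  also have "\<dots> = 1 + (\<integral>\<^sup>+ x. ennreal ((norm (F x))\<^sup>2) \<partial>M)"
    using assms(1) by (subst nn_integral_add) (auto simp: emeasure_space_1)
  also have "\<dots> < \<infinity>"
    using assms(2) by (simp add: less_top)
  finally show "(\<integral>\<^sup>+ x. norm (F x) \<partial>M) < \<infinity>" .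
qed (fact assms)

lemma inv_L2_diff:
  assumes "s \<in> inv_L2 act mu" "t \<in> inv_L2 act mu"
  shows "(\<lambda>x. s x - t x) \<in> inv_L2 act mu"
  using assms L2_diff unfolding inv_L2_def G_invariant_def by auto

locale orbit_averaging = L: prob_space lam + M: prob_space mu
  for lam :: "'g::topological_space measure" and mu :: "'x::topological_space measure" +
  fixes m :: "'g \<Rightarrow> 'g \<Rightarrow> 'g" and e :: 'g and act :: "'g \<Rightarrow> 'x \<Rightarrow> 'x"
  assumes sets_lam: "sets lam = sets borel"
    and measurable_mult_right: "(\<lambda>g. m g h) \<in> measurable lam lam"
    and distr_mult_right: "distr lam lam (\<lambda>g. m g h) = lam"
    and action: "meas_action m e act"
    and invariant: "invariant_prob act mu"
begin

sublocale LM: pair_sigma_finite lam mu ..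

lemma sets_mu: "sets mu = sets borel"
  using invariant unfolding invariant_prob_def by auto

lemma space_mu: "space mu = UNIV"
  using sets_eq_imp_space_eq[OF sets_mu] by simp

lemma act_mult: "act (m g h) x = act g (act h x)"
  using action unfolding meas_action_def by auto

lemma measurable_act_pair: "(\<lambda>p. act (fst p) (snd p)) \<in> measurable (lam \<Otimes>\<^sub>M mu) mu"
  using action measurable_cong_sets[OF sets_pair_measure_cong[OF sets_lam sets_mu] sets_mu]
  unfolding meas_action_def by simp

lemma measurable_act_pair_swap: "(\<lambda>p. act (snd p) (fst p)) \<in> measurable (mu \<Otimes>\<^sub>M lam) mu"
  using measurable_compose[OF measurable_Pair[OF measurable_snd measurable_fst] measurable_act_pair]
  by simp

lemma measurable_act: "act g \<in> measurable mu mu"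
  using measurable_compose[OF measurable_Pair1'[of g lam mu] measurable_act_pair] space_mu
    sets_eq_imp_space_eq[OF sets_lam]
  by simp

lemma measurable_act_orbit: "(\<lambda>g. act g x) \<in> measurable lam mu"
  using measurable_compose[OF measurable_Pair2'[of x mu lam] measurable_act_pair] space_mu by simp

lemma distr_act: "distr mu mu (act g) = mu"
proof (rule measure_eqI)
  fix A assume "A \<in> sets (distr mu mu (act g))"
  then have "A \<in> sets borel"
    using sets_mu by simp
  then show "emeasure (distr mu mu (act g)) A = emeasure mu A"
    using invariant emeasure_distr[OF measurable_act] sets_mu space_mu
    unfolding invariant_prob_def by simp
qed simp

lemma nn_integral_orbit_nn_integral:
  assumes "\<phi> \<in> borel_measurable mu"
  shows "(\<integral>\<^sup>+ x. (\<integral>\<^sup>+ g. \<phi> (act g x) \<partial>lam) \<partial>mu) = integral\<^sup>N mu \<phi>"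
proof -
  have "(\<lambda>p. \<phi> (act (fst p) (snd p))) \<in> borel_measurable (lam \<Otimes>\<^sub>M mu)"
    by (rule measurable_compose[OF measurable_act_pair assms])
  from LM.Fubini[OF this]
  have "(\<integral>\<^sup>+ x. (\<integral>\<^sup>+ g. \<phi> (act g x) \<partial>lam) \<partial>mu) = (\<integral>\<^sup>+ g. (\<integral>\<^sup>+ x. \<phi> (act g x) \<partial>mu) \<partial>lam)"
    by simp
  also have "\<dots> = (\<integral>\<^sup>+ g. integral\<^sup>N mu \<phi> \<partial>lam)"
    using nn_integral_distr[OF measurable_act, of \<phi>] assms by (simp add: distr_act)
  also have "\<dots> = integral\<^sup>N mu \<phi>"
    by (simp add: L.emeasure_space_1)
  finally show ?thesis .
qed

lemma integral_orbit_integral: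
  fixes \<psi> :: "'x \<Rightarrow> real"
  assumes "integrable mu \<psi>"
  shows "(\<integral>x. (\<integral>g. \<psi> (act g x) \<partial>lam) \<partial>mu) = integral\<^sup>L mu \<psi>"
proof -
  have meas: "\<psi> \<in> borel_measurable mu"
    using assms by simp
  have integral_act: "(\<integral>x. \<psi> (act g x) \<partial>mu) = integral\<^sup>L mu \<psi>" for g
    using integral_distr[OF measurable_act meas] by (simp add: distr_act)
  have meas_pair: "(\<lambda>p. \<psi> (act (fst p) (snd p))) \<in> borel_measurable (lam \<Otimes>\<^sub>M mu)"
    by (rule measurable_compose[OF measurable_act_pair meas])
  have "(\<integral>\<^sup>+ p. norm (\<psi> (act (fst p) (snd p))) \<partial>(lam \<Otimes>\<^sub>M mu))
      = (\<integral>\<^sup>+ g. (\<integral>\<^sup>+ x. norm (\<psi> (act g x)) \<partial>mu) \<partial>lam)"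
    using M.nn_integral_fst[of "\<lambda>p. ennreal (norm (\<psi> (act (fst p) (snd p))))"] meas_pair
    by simp
  also have "\<dots> = (\<integral>\<^sup>+ x. norm (\<psi> x) \<partial>mu)"
    using nn_integral_distr[OF measurable_act, of "\<lambda>x. ennreal (norm (\<psi> x))"] meas
    by (simp add: distr_act L.emeasure_space_1)
  also have "\<dots> < \<infinity>"
    using assms by (simp add: integrable_iff_bounded)
  finally have "integrable (lam \<Otimes>\<^sub>M mu) (\<lambda>p. \<psi> (act (fst p) (snd p)))"
    by (intro integrableI_bounded meas_pair)
  then have "(\<integral>x. (\<integral>g. \<psi> (act g x) \<partial>lam) \<partial>mu) = (\<integral>g. (\<integral>x. \<psi> (act g x) \<partial>mu) \<partial>lam)"
    using LM.Fubini_integral[of "\<lambda>g x. \<psi> (act g x)"] by (simp add: split_beta')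
  also have "\<dots> = integral\<^sup>L mu \<psi>"
    by (simp add: integral_act L.prob_space)
  finally show ?thesis .
qed


lemma borel_measurable_orbit_avg:
  assumes "f \<in> borel_measurable mu"
  shows "orbit_avg lam act f \<in> borel_measurable mu"
  unfolding orbit_avg_def
  by (rule L.borel_measurable_lebesgue_integral)
    (use measurable_compose[OF measurable_act_pair_swap assms] in \<open>simp add: split_beta'\<close>)

lemma nn_integral_orbit_norm_power2:
  assumes "f \<in> L2 mu"
  shows "(\<integral>\<^sup>+ x. (\<integral>\<^sup>+ g. ennreal ((norm (f (act g x)))\<^sup>2) \<partial>lam) \<partial>mu) = ennreal (L2_norm_sq mu f)"
  using assms unfolding L2_def L2_norm_sq_def
  by (subst nn_integral_orbit_nn_integral) (auto intro!: nn_integral_eq_integral)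

lemma orbit_avg_L2:
  assumes "f \<in> L2 mu"
  shows "orbit_avg lam act f \<in> L2 mu"
proof -
  have meas: "f \<in> borel_measurable mu"
    using assms unfolding L2_def by auto
  have "(\<integral>\<^sup>+ x. norm ((norm (orbit_avg lam act f x))\<^sup>2) \<partial>mu)
      \<le> (\<integral>\<^sup>+ x. (\<integral>\<^sup>+ g. ennreal ((norm (f (act g x)))\<^sup>2) \<partial>lam) \<partial>mu)"
    unfolding orbit_avg_def
    by (auto intro!: nn_integral_mono L.norm_integral_power2_le_nn_integral
        measurable_compose[OF measurable_act_orbit meas])
  also have "\<dots> < \<infinity>"
    using nn_integral_orbit_norm_power2[OF assms] by simp
  finally have "integrable mu (\<lambda>x. (norm (orbit_avg lam act f x))\<^sup>2)"
    by (intro integrableI_bounded) (use borel_measurable_orbit_avg[OF meas] in measurable)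
  then show ?thesis
    using borel_measurable_orbit_avg[OF meas] unfolding L2_def by auto
qed

lemma G_invariant_orbit_avg:
  assumes "f \<in> borel_measurable mu"
  shows "G_invariant act (orbit_avg lam act f)"
  unfolding G_invariant_def
proof (intro allI)
  fix h x
  have "orbit_avg lam act f (act h x) = (\<integral>g. f (act (m g h) x) \<partial>lam)"
    unfolding orbit_avg_def act_mult ..
  also have "\<dots> = integral\<^sup>L (distr lam lam (\<lambda>g. m g h)) (\<lambda>g. f (act g x))"
    by (rule integral_distr[OF measurable_mult_right measurable_compose[OF measurable_act_orbit assms], symmetric])
  also have "\<dots> = orbit_avg lam act f x"
    unfolding distr_mult_right orbit_avg_def ..
  finally show "orbit_avg lam act f (act h x) = orbit_avg lam act f x" .
qed


lemma AE_integrable_orbit: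
  assumes "f \<in> L2 mu"
  shows "AE x in mu. integrable lam (\<lambda>g. f (act g x))"
proof -
  have meas: "f \<in> borel_measurable mu"
    using assms unfolding L2_def by auto
  have "(\<lambda>p. ennreal ((norm (f (act (snd p) (fst p))))\<^sup>2)) \<in> borel_measurable (mu \<Otimes>\<^sub>M lam)"
    using measurable_compose[OF measurable_act_pair_swap meas] by measurable
  then have "AE x in mu. (\<integral>\<^sup>+ g. ennreal ((norm (f (act g x)))\<^sup>2) \<partial>lam) \<noteq> \<infinity>"
    using nn_integral_orbit_norm_power2[OF assms]
    by (intro nn_integral_PInf_AE) (auto dest: L.borel_measurable_nn_integral_fst)
  then show ?thesis
    by eventually_elim (auto intro: L.integrable_if_nn_integral_norm_power2_finite
        measurable_compose[OF measurable_act_orbit meas] simp: less_top)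
qed

lemma integral_inner_orbit_avg:
  assumes "f \<in> L2 mu" "t \<in> inv_L2 act mu"
  shows "(\<integral>x. orbit_avg lam act f x \<bullet> t x \<partial>mu) = (\<integral>x. f x \<bullet> t x \<partial>mu)"
proof -
  have t: "t \<in> L2 mu" "\<And>g x. t (act g x) = t x"
    using assms(2) unfolding inv_L2_def G_invariant_def by auto
  have meas: "f \<in> borel_measurable mu" "t \<in> borel_measurable mu"
    using assms(1) t(1) unfolding L2_def by auto
  have "(\<integral>x. orbit_avg lam act f x \<bullet> t x \<partial>mu) = (\<integral>x. (\<integral>g. f (act g x) \<bullet> t (act g x) \<partial>lam) \<partial>mu)"
  proof (rule integral_cong_AE)
    show "(\<lambda>x. orbit_avg lam act f x \<bullet> t x) \<in> borel_measurable mu"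
      using borel_measurable_orbit_avg[OF meas(1)] meas(2) by measurable
    have "(\<lambda>(x, g). f (act g x) \<bullet> t (act g x)) \<in> borel_measurable (mu \<Otimes>\<^sub>M lam)"
      using measurable_compose[OF measurable_act_pair_swap, of "\<lambda>y. f y \<bullet> t y"] meas
      by (simp add: split_beta')
    then show "(\<lambda>x. \<integral>g. f (act g x) \<bullet> t (act g x) \<partial>lam) \<in> borel_measurable mu"
      by (rule L.borel_measurable_lebesgue_integral)
    show "AE x in mu. orbit_avg lam act f x \<bullet> t x = (\<integral>g. f (act g x) \<bullet> t (act g x) \<partial>lam)"
      using AE_integrable_orbit[OF assms(1)] by eventually_elim (simp add: orbit_avg_def t(2))
  qed
  also have "\<dots> = (\<integral>x. f x \<bullet> t x \<partial>mu)"
    by (rule integral_orbit_integral[OF L2_integrable_inner[OF assms(1) t(1)]])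
  finally show ?thesis .
qed

lemma orbit_avg_residual_orthogonal:
  assumes "f \<in> L2 mu" "t \<in> inv_L2 act mu"
  shows "(\<integral>x. (f x - orbit_avg lam act f x) \<bullet> t x \<partial>mu) = 0"
proof -
  have "t \<in> L2 mu"
    using assms(2) unfolding inv_L2_def by auto
  then show ?thesis
    using integral_inner_orbit_avg[OF assms] L2_integrable_inner[OF assms(1)]
      L2_integrable_inner[OF orbit_avg_L2[OF assms(1)]]
    by (simp add: inner_diff_left)
qed

lemma orbit_avg_inv_L2:
  assumes "f \<in> L2 mu"
  shows "orbit_avg lam act f \<in> inv_L2 act mu"
  using orbit_avg_L2[OF assms] G_invariant_orbit_avg assms unfolding inv_L2_def L2_def by auto

end

theorem proposition3p9:
  fixes m :: "'g::{t2_space, second_countable_topology} \<Rightarrow> 'g \<Rightarrow> 'g"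
    and i :: "'g \<Rightarrow> 'g" and e :: 'g
    and lam :: "'g measure"
    and act :: "'g \<Rightarrow> 'x::polish_space \<Rightarrow> 'x"
    and mu :: "'x measure"
    and f :: "'x \<Rightarrow> 'y::euclidean_space"
  assumes "top_group m i e"
    and "compact (UNIV :: 'g set)"
    and "haar_prob m lam"
    and "meas_action m e act"
    and "invariant_prob act mu"
    and "f \<in> L2 mu"
  shows "orbit_avg lam act f \<in> inv_L2 act mu
         \<and> (\<forall>s \<in> inv_L2 act mu. L2_norm_sq mu (\<lambda>x. f x - orbit_avg lam act f x)
                                 \<le> L2_norm_sq mu (\<lambda>x. f x - s x))
         \<and> (\<forall>s \<in> inv_L2 act mu.
               (\<forall>s' \<in> inv_L2 act mu. L2_norm_sq mu (\<lambda>x. f x - s x) \<le> L2_norm_sq mu (\<lambda>x. f x - s' x))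
               \<longrightarrow> (AE x in mu. s x = orbit_avg lam act f x))"
proof -
  have lam: "prob_space lam" "sets lam = sets borel"
    using assms(3) unfolding haar_prob_def by auto
  have "(\<lambda>g. m g h) \<in> measurable lam lam" for h
    using top_group_borel_measurable(4)[OF assms(1)] measurable_cong_sets[OF lam(2) lam(2)] by simp
  moreover have "prob_space mu"
    using assms(5) unfolding invariant_prob_def by auto
  ultimately interpret orbit_averaging lam mu m e act
    using lam haar_prob_distr_mult_right[OF assms(1,3)] assms(4,5)
    by (intro orbit_averaging.intro orbit_averaging_axioms.intro)
  have avg: "orbit_avg lam act f \<in> inv_L2 act mu"
    by (rule orbit_avg_inv_L2[OF assms(6)])
  have "inv_L2 act mu \<subseteq> L2 mu"
    unfolding inv_L2_def by auto
  note best = L2_best_approximation[OF assms(6) avg this inv_L2_diff[OF avg]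
      orbit_avg_residual_orthogonal[OF assms(6)]]
  show ?thesis
    using avg best(1) by (blast intro: best(2))
qed

end
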